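(* Consider problem (P) and suppose $\bar x\in S$ is a weak local minimizer for (P). Then $F^{(1)}_-(\bar x;u)\ge 0$ for all $u\in\mathbb{R}^s$ (so $0\in\partial^{(1)}_- F(\bar x)$), and $F^{(2)}_-(\bar x;0;u)\ge 0$ for all $u\in\mathbb{R}^s$.
   Context: Problem (P): $C$-minimize $f(x)$ subject to $g(x)\in -K$, where $X\subset\mathbb{R}^s$ is open, $f:X\to\mathbb{R}^n$, $g:X\to\mathbb{R}^m$, and $C\subset\mathbb{R}^n$, $K\subset\mathbb{R}^m$ are closed convex cones with vertex at the origin; $C$ has nonempty interior and $C\ne\mathbb{R}^n$. Feasible set $S=\{x\in X: g(x)\in -K\}$. Positive polar of a cone $D$: $D^*=\{\lambda:\lambda\cdot y\ge 0\ \forall y\in D\}$. A feasible $\bar x$ is a weak local minimizer iff some neighborhood $N$ of $\bar x$ contains no $x\in S$ with $f(x)\in f(\bar x)-\operatorname{int}(C)$. $\Lambda=\{(\lambda,\mu): \lambda\in C^*,\ \mu\in K^*,\ \sum\lambda_i^2+\sum\mu_j^2=1\}$, $F(x)=\max\{\lambda\cdot[f(x)-f(\bar x)]+\mu\cdot g(x):(\lambda,\mu)\in\Lambda\}$. For $F$ at $\bar x$: $F^{(1)}_-(\bar x;u)=\liminf_{t\downarrow 0,\,u'\to u}t^{-1}[F(\bar x+tu')-F(\bar x)]$; $\partial^{(1)}_- F(\bar x)=\{x^*\text{ linear}: x^*(u)\le F^{(1)}_-(\bar x;u)\ \forall u\}$; and when $0\in\partial^{(1)}_-F(\bar x)$,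 $F^{(2)}_-(\bar x;0;u)=\liminf_{t\downarrow 0,\,u'\to u}2t^{-2}[F(\bar x+tu')-F(\bar x)]$. *)

theory Defs
  imports "HOL-Analysis.Analysis"
begin

definition pos_polar :: "'a::real_inner set \<Rightarrow> 'a set" where
  "pos_polar D = {l. \<forall>y\<in>D. l \<bullet> y \<ge> 0}"

definition closed_convex_cone :: "'a::real_normed_vector set \<Rightarrow> bool" where
  "closed_convex_cone D \<longleftrightarrow> closed D \<and> convex D \<and> cone D \<and> 0 \<in> D"

definition feasible_set :: "'a set \<Rightarrow> ('a \<Rightarrow> 'c::real_vector) \<Rightarrow> 'c set \<Rightarrow> 'a set" where
  "feasible_set X g K = {x\<in>X. g x \<in> uminus ` K}"

definition weak_local_min ::
  "'a::topological_space set \<Rightarrow> ('a \<Rightarrow> 'b::real_normed_vector) \<Rightarrow> ('a \<Rightarrow> 'c::real_vector)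
     \<Rightarrow> 'b set \<Rightarrow> 'c set \<Rightarrow> 'a \<Rightarrow> bool" where
  "weak_local_min X f g C K xb \<longleftrightarrow> xb \<in> feasible_set X g K \<and>
     (\<exists>N. open N \<and> xb \<in> N \<and>
        \<not> (\<exists>x\<in>feasible_set X g K \<inter> N. f x \<in> (\<lambda>c. f xb - c) ` interior C))"

definition Lam :: "'b::real_inner set \<Rightarrow> 'c::real_inner set \<Rightarrow> ('b \<times> 'c) set" where
  "Lam C K = {(l, m). l \<in> pos_polar C \<and> m \<in> pos_polar K \<and> l \<bullet> l + m \<bullet> m = 1}"

definition Fsc :: "('a \<Rightarrow> 'b::real_inner) \<Rightarrow> ('a \<Rightarrow> 'c::real_inner) \<Rightarrow> 'b set \<Rightarrow> 'c set
     \<Rightarrow> 'a \<Rightarrow> 'a \<Rightarrow> real" where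
  "Fsc f g C K xb x = (SUP p\<in>Lam C K. fst p \<bullet> (f x - f xb) + snd p \<bullet> g x)"

definition lower_dir1 :: "('a::real_normed_vector \<Rightarrow> real) \<Rightarrow> 'a \<Rightarrow> 'a \<Rightarrow> ereal" where
  "lower_dir1 F xb u =
     Liminf (at_right (0::real) \<times>\<^sub>F nhds u) (\<lambda>(t, u'). ereal ((F (xb + t *\<^sub>R u') - F xb) / t))"

definition lower_subdiff1 :: "('a::real_normed_vector \<Rightarrow> real) \<Rightarrow> 'a \<Rightarrow> ('a \<Rightarrow> real) set" where
  "lower_subdiff1 F xb = {xs. linear xs \<and> (\<forall>u. ereal (xs u) \<le> lower_dir1 F xb u)}"

text \<open>Lower second-order derivative at xb in direction u (with first-order part 0).\<close>
definition lower_dir2 :: "('a::real_normed_vector \<Rightarrow> real) \<Rightarrow> 'a \<Rightarrow> 'a \<Rightarrow> ereal" where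
  "lower_dir2 F xb u =
     Liminf (at_right (0::real) \<times>\<^sub>F nhds u) (\<lambda>(t, u'). ereal (2 * (F (xb + t *\<^sub>R u') - F xb) / t\<^sup>2))"

end

theory Submission imports Defs begin

text \<open>Near a weak local minimizer \<open>xb\<close> the scalarization \<open>F\<close> is nonnegative: at a feasible point
  \<open>x\<close> the vector \<open>f xb - f x\<close> lies outside \<open>interior C\<close>, and at an infeasible one \<open>-g x\<close> lies
  outside \<open>K\<close>; in either case separation yields a normalized multiplier making the scalarized
  value nonnegative. Since also \<open>F xb \<le> 0\<close>, the point \<open>xb\<close> is an unconstrained local minimizer of
  \<open>F\<close>, so all its lower difference quotients of first and second order are eventually
  nonnegative.\<close>

lemma nonneg_if_bounded_below_all_multiples:
  fixes b t :: real
  assumes "\<And>r. r > 0 \<Longrightarrow> b \<le> r * t"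
  shows "0 \<le> t"
proof (rule ccontr)
  assume "\<not> 0 \<le> t"
  define r where "r = (\<bar>b\<bar> + 1) / - t"
  have "r > 0" using \<open>\<not> 0 \<le> t\<close> unfolding r_def by (simp add: divide_pos_neg)
  hence "b \<le> r * t" by (rule assms)
  also have "\<dots> = - (\<bar>b\<bar> + 1)" using \<open>\<not> 0 \<le> t\<close> unfolding r_def by simp
  finally show False by linarith
qed

lemma nonpos_if_bounded_below_all_multiples:
  fixes b t :: real
  assumes "\<And>r. r > 0 \<Longrightarrow> b \<le> r * t" and "0 \<le> t"
  shows "b \<le> 0"
proof (rule ccontr)
  assume "\<not> b \<le> 0"
  hence "b / (t + 1) > 0" using assms(2) by simp
  hence "b \<le> (b / (t + 1)) * t" by (rule assms(1))
  also have "\<dots> < b" using \<open>\<not> b \<le> 0\<close> assms(2) by (simp add: divide_less_eq)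
  finally show False by simp
qed

lemma cone_interior_scaleR:
  fixes C :: "'a::real_normed_vector set"
  assumes "cone C" and "c \<in> interior C" and "r > 0"
  shows "r *\<^sub>R c \<in> interior C"
proof -
  have "open ((*\<^sub>R) r ` interior C)" using assms(3) open_scaling[of r "interior C"] by simp
  moreover have "(*\<^sub>R) r ` interior C \<subseteq> C"
    using assms(1,3) interior_subset unfolding cone_def by fastforce
  ultimately have "(*\<^sub>R) r ` interior C \<subseteq> interior C" by (simp add: interior_maximal)
  thus ?thesis using assms(2) by blast
qed

lemma pos_polar_exists_not_in_interior:
  fixes C :: "'a::euclidean_space set"
  assumes "convex C" and "cone C" and "interior C \<noteq> {}" and "w \<notin> interior C"
  shows "\<exists>a. a \<noteq> 0 \<and> a \<in> pos_polar C \<and> a \<bullet> w \<le> 0"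
proof -
  have "convex ((\<lambda>c. c - w) ` interior C)"
    using convex_translation[of "interior C" "-w"] convex_interior[OF assms(1)] by simp
  moreover have "0 \<notin> (\<lambda>c. c - w) ` interior C" using assms(4) by auto
  ultimately obtain a where "a \<noteq> 0" and a: "\<forall>x\<in>(\<lambda>c. c - w) ` interior C. 0 \<le> a \<bullet> x"
    using separating_hyperplane_set_0 by blast
  \<comment> \<open>\<open>interior C\<close> is invariant under positive scaling, so the separating inequality holds for all \<open>r c\<close>\<close>
  have below: "a \<bullet> w \<le> r * (a \<bullet> c)" if "c \<in> interior C" "r > 0" for c r
    using a cone_interior_scaleR[OF assms(2) that] by (force simp: inner_diff_right)
  have nonneg: "0 \<le> a \<bullet> c" if "c \<in> interior C" for c
    using below[OF that] by (rule nonneg_if_bounded_below_all_multiples)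
  obtain c0 where "c0 \<in> interior C" using assms(3) by blast
  have "a \<bullet> w \<le> 0"
    using below[OF \<open>c0 \<in> interior C\<close>] nonneg[OF \<open>c0 \<in> interior C\<close>]
    by (rule nonpos_if_bounded_below_all_multiples)
  have "closure (interior C) \<subseteq> {x. 0 \<le> a \<bullet> x}"
    using nonneg by (intro closure_minimal) (auto simp: closed_halfspace_ge)
  hence "C \<subseteq> {x. 0 \<le> a \<bullet> x}"
    using convex_closure_interior[OF assms(1,3)] closure_subset by blast
  hence "a \<in> pos_polar C" unfolding pos_polar_def by auto
  with \<open>a \<noteq> 0\<close> \<open>a \<bullet> w \<le> 0\<close> show ?thesis by blast
qed

lemma pos_polar_exists_not_in_cone:
  fixes K :: "'a::euclidean_space set"
  assumes "closed K" and "convex K" and "cone K" and "0 \<in> K" and "z \<notin> K"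
  shows "\<exists>a. a \<in> pos_polar K \<and> a \<bullet> z < 0"
proof -
  obtain a b where "a \<bullet> z < b" and sep: "\<forall>x\<in>K. b < a \<bullet> x"
    using separating_hyperplane_closed_point[OF assms(2,1,5)] by blast
  have "b < 0" using sep assms(4) by force
  have "0 \<le> a \<bullet> k" if "k \<in> K" for k
  proof (rule nonneg_if_bounded_below_all_multiples)
    fix r :: real assume "r > 0"
    hence "r *\<^sub>R k \<in> K" using assms(3) that unfolding cone_def by simp
    thus "b \<le> r * (a \<bullet> k)" using sep by fastforce
  qed
  hence "a \<in> pos_polar K" unfolding pos_polar_def by auto
  with \<open>a \<bullet> z < b\<close> \<open>b < 0\<close> show ?thesis by auto
qed

lemma zero_in_pos_polar: "0 \<in> pos_polar D"
  unfolding pos_polar_def by simp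

lemma pos_polar_scaleR: "a \<in> pos_polar D \<Longrightarrow> 0 \<le> r \<Longrightarrow> r *\<^sub>R a \<in> pos_polar D"
  unfolding pos_polar_def by simp

lemma inner_sgn_self: "(a::'a::real_inner) \<noteq> 0 \<Longrightarrow> sgn a \<bullet> sgn a = 1"
  by (simp add: sgn_div_norm power2_norm_eq_inner[symmetric] power2_eq_square)

lemma sgn_pos_polar: "a \<in> pos_polar D \<Longrightarrow> sgn a \<in> pos_polar D"
  by (simp add: sgn_div_norm divide_inverse pos_polar_scaleR)

lemma sgn_zero_in_Lam: "a \<noteq> 0 \<Longrightarrow> a \<in> pos_polar C \<Longrightarrow> (sgn a, 0) \<in> Lam C K"
  unfolding Lam_def by (simp add: inner_sgn_self sgn_pos_polar zero_in_pos_polar)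

lemma zero_sgn_in_Lam: "a \<noteq> 0 \<Longrightarrow> a \<in> pos_polar K \<Longrightarrow> (0, sgn a) \<in> Lam C K"
  unfolding Lam_def by (simp add: inner_sgn_self sgn_pos_polar zero_in_pos_polar)

lemma Lam_nonempty:
  fixes C :: "'a::euclidean_space set"
  assumes "convex C" and "cone C" and "interior C \<noteq> {}" and "C \<noteq> UNIV"
  shows "Lam C K \<noteq> {}"
proof -
  obtain w where "w \<notin> C" using assms(4) by blast
  hence "w \<notin> interior C" using interior_subset by blast
  then obtain a where "a \<noteq> 0" "a \<in> pos_polar C"
    using pos_polar_exists_not_in_interior[OF assms(1-3)] by blast
  thus ?thesis using sgn_zero_in_Lam by blast
qed

lemma Lam_norm_le_one:
  assumes "p \<in> Lam C K"
  shows "norm (fst p) \<le> 1" and "norm (snd p) \<le> 1"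
proof -
  have "fst p \<bullet> fst p + snd p \<bullet> snd p = 1" using assms unfolding Lam_def by auto
  hence "norm (fst p) ^ 2 \<le> 1" "norm (snd p) ^ 2 \<le> 1"
    by (simp_all add: power2_norm_eq_inner) (smt (verit) inner_ge_zero)+
  thus "norm (fst p) \<le> 1" "norm (snd p) \<le> 1"
    by (simp_all add: power_le_one_iff abs_le_square_iff[symmetric])
qed

lemma bdd_above_Fsc_values:
  "bdd_above ((\<lambda>p. fst p \<bullet> (f x - f xb) + snd p \<bullet> g x) ` Lam C K)"
proof (rule bdd_aboveI2)
  fix p assume p: "p \<in> Lam C K"
  have "fst p \<bullet> (f x - f xb) \<le> norm (fst p) * norm (f x - f xb)" by (rule norm_cauchy_schwarz)
  also have "\<dots> \<le> norm (f x - f xb)" using Lam_norm_le_one(1)[OF p] by (simp add: mult_left_le_one_le)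
  finally have "fst p \<bullet> (f x - f xb) \<le> norm (f x - f xb)" .
  moreover have "snd p \<bullet> g x \<le> norm (snd p) * norm (g x)" by (rule norm_cauchy_schwarz)
  moreover have "\<dots> \<le> norm (g x)" using Lam_norm_le_one(2)[OF p] by (simp add: mult_left_le_one_le)
  ultimately show "fst p \<bullet> (f x - f xb) + snd p \<bullet> g x \<le> norm (f x - f xb) + norm (g x)"
    by linarith
qed

lemma Fsc_ge_value:
  assumes "p \<in> Lam C K"
  shows "fst p \<bullet> (f x - f xb) + snd p \<bullet> g x \<le> Fsc f g C K xb x"
  unfolding Fsc_def by (rule cSUP_upper[OF assms bdd_above_Fsc_values])

lemma Fsc_nonpos_at_feasible_base:
  assumes "xb \<in> feasible_set X g K" and "Lam C K \<noteq> {}"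
  shows "Fsc f g C K xb xb \<le> 0"
  unfolding Fsc_def
proof (rule cSUP_least[OF assms(2)])
  fix p assume "p \<in> Lam C K"
  obtain k where "k \<in> K" "g xb = - k" using assms(1) unfolding feasible_set_def by auto
  hence "0 \<le> snd p \<bullet> k" using \<open>p \<in> Lam C K\<close> unfolding Lam_def pos_polar_def by auto
  thus "fst p \<bullet> (f xb - f xb) + snd p \<bullet> g xb \<le> 0" using \<open>g xb = - k\<close> by simp
qed

lemma Fsc_nonneg_if_not_improving:
  fixes f :: "'a \<Rightarrow> 'n::euclidean_space" and g :: "'a \<Rightarrow> 'm::euclidean_space"
  assumes "convex C" and "cone C" and "interior C \<noteq> {}" and "f xb - f x \<notin> interior C"
  shows "0 \<le> Fsc f g C K xb x"
proof -
  obtain a where "a \<noteq> 0" "a \<in> pos_polar C" "a \<bullet> (f xb - f x) \<le> 0"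
    using pos_polar_exists_not_in_interior[OF assms] by blast
  hence "0 \<le> sgn a \<bullet> (f x - f xb)"
    by (simp add: sgn_div_norm inner_diff_right divide_inverse mult_nonneg_nonneg)
  moreover have "(sgn a, 0) \<in> Lam C K" using \<open>a \<noteq> 0\<close> \<open>a \<in> pos_polar C\<close> by (rule sgn_zero_in_Lam)
  from Fsc_ge_value[OF this] have "sgn a \<bullet> (f x - f xb) \<le> Fsc f g C K xb x" by simp
  ultimately show ?thesis by linarith
qed

lemma Fsc_nonneg_if_infeasible:
  fixes f :: "'a \<Rightarrow> 'n::euclidean_space" and g :: "'a \<Rightarrow> 'm::euclidean_space"
  assumes "closed K" and "convex K" and "cone K" and "0 \<in> K" and "g x \<notin> uminus ` K"
  shows "0 \<le> Fsc f g C K xb x"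
proof -
  have "- g x \<notin> K" using assms(5) by (metis image_eqI minus_minus)
  then obtain a where "a \<in> pos_polar K" "a \<bullet> (- g x) < 0"
    using pos_polar_exists_not_in_cone[OF assms(1-4)] by blast
  moreover from this have "a \<noteq> 0" by auto
  ultimately have "0 \<le> sgn a \<bullet> g x"
    by (simp add: sgn_div_norm divide_inverse)
  moreover have "(0, sgn a) \<in> Lam C K" using \<open>a \<noteq> 0\<close> \<open>a \<in> pos_polar K\<close> by (rule zero_sgn_in_Lam)
  from Fsc_ge_value[OF this] have "sgn a \<bullet> g x \<le> Fsc f g C K xb x" by simp
  ultimately show ?thesis by linarith
qed

lemma weak_local_min_imp_Fsc_local_min:
  fixes f :: "'s::euclidean_space \<Rightarrow> 'n::euclidean_space" and g :: "'s \<Rightarrow> 'm::euclidean_space"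
  assumes "open X" and "closed_convex_cone C" and "interior C \<noteq> {}" and "C \<noteq> UNIV"
    and "closed_convex_cone K" and "weak_local_min X f g C K xb"
  shows "\<forall>\<^sub>F x in nhds xb. Fsc f g C K xb xb \<le> Fsc f g C K xb x"
proof -
  have C: "convex C" "cone C" and K: "closed K" "convex K" "cone K" "0 \<in> K"
    using assms(2,5) unfolding closed_convex_cone_def by auto
  obtain N where "open N" "xb \<in> N" and xb: "xb \<in> feasible_set X g K"
    and no_improvement: "\<not> (\<exists>x\<in>feasible_set X g K \<inter> N. f x \<in> (\<lambda>c. f xb - c) ` interior C)"
    using assms(6) unfolding weak_local_min_def by blast
  have nonpos_at_xb: "Fsc f g C K xb xb \<le> 0"
    using Fsc_nonpos_at_feasible_base[OF xb Lam_nonempty[OF C assms(3,4)]] .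
  have nonneg_near_xb: "0 \<le> Fsc f g C K xb x" if "x \<in> X \<inter> N" for x
  proof (cases "g x \<in> uminus ` K")
    case True
    hence "x \<in> feasible_set X g K \<inter> N" using that unfolding feasible_set_def by auto
    hence "f xb - f x \<notin> interior C" using no_improvement by force
    thus ?thesis by (rule Fsc_nonneg_if_not_improving[OF C assms(3)])
  next
    case False
    thus ?thesis by (rule Fsc_nonneg_if_infeasible[OF K])
  qed
  have "\<forall>\<^sub>F x in nhds xb. x \<in> X \<inter> N"
    using xb \<open>open N\<close> \<open>xb \<in> N\<close> assms(1) unfolding feasible_set_def
    by (intro eventually_nhds_in_open) auto
  thus ?thesis by (rule eventually_mono) (use nonpos_at_xb nonneg_near_xb in force)
qed

lemma local_min_along_directions:
  fixes F :: "'a::real_normed_vector \<Rightarrow> real"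
  assumes "\<forall>\<^sub>F x in nhds xb. F xb \<le> F x"
  shows "\<forall>\<^sub>F (t, u') in at_right 0 \<times>\<^sub>F nhds u. 0 < t \<and> F xb \<le> F (xb + t *\<^sub>R u')"
proof -
  have "((\<lambda>(t, u'). xb + t *\<^sub>R u') \<longlongrightarrow> xb + 0 *\<^sub>R u) (at_right 0 \<times>\<^sub>F nhds u)"
    unfolding case_prod_beta
  proof (intro tendsto_intros)
    have "at_right (0::real) \<le> nhds 0" unfolding at_within_def by (rule inf_le1)
    thus "(fst \<longlongrightarrow> 0) (at_right (0::real) \<times>\<^sub>F nhds u)"
      using filterlim_mono[OF filterlim_fst] by blast
  qed (rule filterlim_snd)
  hence "\<forall>\<^sub>F (t, u') in at_right 0 \<times>\<^sub>F nhds u. F xb \<le> F (xb + t *\<^sub>R u')"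
    using assms unfolding filterlim_iff case_prod_beta by fastforce
  moreover have "\<forall>\<^sub>F p in at_right (0::real) \<times>\<^sub>F nhds u. 0 < fst p \<and> True"
    by (rule eventually_prodI) (auto simp: eventually_at_right_less)
  ultimately show ?thesis by eventually_elim auto
qed

lemma lower_dir1_nonneg_at_local_min:
  fixes F :: "'a::real_normed_vector \<Rightarrow> real"
  assumes "\<forall>\<^sub>F x in nhds xb. F xb \<le> F x"
  shows "0 \<le> lower_dir1 F xb u"
  unfolding lower_dir1_def zero_ereal_def
  by (rule Liminf_bounded, use local_min_along_directions[OF assms, of u] in eventually_elim) auto

lemma lower_dir2_nonneg_at_local_min:
  fixes F :: "'a::real_normed_vector \<Rightarrow> real"
  assumes "\<forall>\<^sub>F x in nhds xb. F xb \<le> F x"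
  shows "0 \<le> lower_dir2 F xb u"
  unfolding lower_dir2_def zero_ereal_def
  by (rule Liminf_bounded, use local_min_along_directions[OF assms, of u] in eventually_elim) auto

lemma zero_in_lower_subdiff1_iff: "(\<lambda>u. 0) \<in> lower_subdiff1 F xb \<longleftrightarrow> (\<forall>u. 0 \<le> lower_dir1 F xb u)"
  unfolding lower_subdiff1_def by (auto intro: linearI simp: zero_ereal_def)

theorem mainTheorem10:
  fixes X :: "'s::euclidean_space set"
    and f :: "'s \<Rightarrow> 'n::euclidean_space"
    and g :: "'s \<Rightarrow> 'm::euclidean_space"
    and C :: "'n set" and K :: "'m set" and xb :: 's
  assumes "open X"
    and "closed_convex_cone C" and "interior C \<noteq> {}" and "C \<noteq> UNIV"
    and "closed_convex_cone K"
    and "weak_local_min X f g C K xb"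
  shows "(\<forall>u. lower_dir1 (Fsc f g C K xb) xb u \<ge> 0)
       \<and> (\<lambda>u. 0) \<in> lower_subdiff1 (Fsc f g C K xb) xb
       \<and> (\<forall>u. lower_dir2 (Fsc f g C K xb) xb u \<ge> 0)"
proof -
  have local_min: "\<forall>\<^sub>F x in nhds xb. Fsc f g C K xb xb \<le> Fsc f g C K xb x"
    using weak_local_min_imp_Fsc_local_min[OF assms] .
  have "\<forall>u. 0 \<le> lower_dir1 (Fsc f g C K xb) xb u"
    using lower_dir1_nonneg_at_local_min[OF local_min] by blast
  moreover have "\<forall>u. 0 \<le> lower_dir2 (Fsc f g C K xb) xb u"
    using lower_dir2_nonneg_at_local_min[OF local_min] by blast
  ultimately show ?thesis by (simp add: zero_in_lower_subdiff1_iff)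
qed

end
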